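(* Let $A,\hat A^0,\tilde A\in\mathbb{R}^{d\times k}$ with columns $a_i,\hat a^0_i,\tilde a_i$, and let $\eta_0,\eta_1>0$, $r:=\eta_0\sqrt k/d$, $\tau:=\eta_1\sqrt{k/d}$. Suppose $\|A\|\le\tau$, $\|\hat A^0\|\le\tau$, and $\|\hat a^0_i-a_i\|\le r$ for all $i$. Let $\tilde A=UDV^\top$ be an SVD, $\hat D$ the diagonal matrix with $\hat D_{ii}=\min\{D_{ii},\tau\}$, $Q:=U\hat DV^\top$ with columns $Q_i$, and define $\hat A$ column-wise by $\hat a_i=Q_i$ if $\|Q_i-\hat a^0_i\|\le r$, and $\hat a_i=\hat a^0_i+r\frac{Q_i-\hat a^0_i}{\|Q_i-\hat a^0_i\|}$ otherwise. Then $\|\hat A-A\|_F\le 2\|\tilde A-A\|_F$, $\|\hat a_i-a_i\|\le 2r$ for all $i$, and $\|\hat A\|\le 3\tau$.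
   Context: $\|\cdot\|$ is the spectral norm and $\|\cdot\|_F$ the Frobenius norm. *)

theory Defs
  imports "HOL-Analysis.Analysis"
begin

definition spec_norm :: "real^'n^'m \<Rightarrow> real" where
  "spec_norm A = onorm (\<lambda>x. A *v x)"

definition frob_norm :: "real^'n^'m \<Rightarrow> real" where
  "frob_norm A = sqrt (\<Sum>i\<in>UNIV. \<Sum>j\<in>UNIV. (A $ i $ j)^2)"

definition mat_of_cols :: "('n::finite \<Rightarrow> real^'m) \<Rightarrow> real^'n^'m" where
  "mat_of_cols c = transpose (\<chi> j. c j)"

end

theory Submission imports Defs begin

(* The estimator is built in two stages, and each stage is a
   contraction towards the ground truth A.
   (1) Singular value clipping  Q = U min(D,tau) V^T  moves At by no more than
       At's distance to A: after conjugating by the orthonormal factors,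
       |min(D_ii,tau) - D_ii| <= |D_ii - (U^T A V)_ii| because
       (U^T A V)_ii <= ||A|| <= tau; hence ||Q - At||_F <= ||At - A||_F, and the
       triangle inequality gives ||Q - A||_F <= 2 ||At - A||_F.  Also ||Q|| <= tau.
   (2) Each column of Q is then replaced by its metric projection onto the ball
       of radius r around the corresponding column of A0.  This ball contains
       the column of A, and projections onto convex sets are non-expansive,
       so columnwise distances to A do not grow; the projected column is at
       distance <= r from a0_i, hence <= 2r from a_i.  Moreover each projected
       column lies on the segment from a0_i to Q_i, so Ahat = A0 (I - T) + Q T
       with a diagonal 0 <= T <= I, giving ||Ahat|| <= ||A0|| + ||Q|| <= 2 tau,
       which is stronger than the claimed bound 3 tau. *)

section \<open>Projection onto a closed ball\<close>

definition ball_proj :: "'a::real_normed_vector \<Rightarrow> real \<Rightarrow> 'a \<Rightarrow> 'a" where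
  "ball_proj c r x =
     (if norm (x - c) \<le> r then x else c + (r / norm (x - c)) *\<^sub>R (x - c))"

text \<open>The radial projection is the metric projection onto the ball: the distance
  from x to it is norm (x - c) - r, a lower bound for the distance to any point
  of the ball by the triangle inequality.\<close>
lemma ball_proj_eq_closest_point:
  fixes c x :: "'a::euclidean_space"
  assumes "r \<ge> 0"
  shows "ball_proj c r x = closest_point (cball c r) x"
proof (rule closest_point_unique)
  show "ball_proj c r x \<in> cball c r"
    using assms by (auto simp: ball_proj_def dist_norm norm_minus_commute)
  show "\<forall>z\<in>cball c r. dist x (ball_proj c r x) \<le> dist x z"
  proof
    fix z assume z: "z \<in> cball c r"
    show "dist x (ball_proj c r x) \<le> dist x z"
    proof (cases "norm (x - c) \<le> r")
      case True thus ?thesis by (simp add: ball_proj_def)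
    next
      case False
      define L where "L = norm (x - c)"
      have L: "L > r" using False by (simp add: L_def)
      have "x - ball_proj c r x = (1 - r / L) *\<^sub>R (x - c)"
        using False by (simp add: ball_proj_def L_def scaleR_diff_left diff_diff_eq[symmetric])
      moreover have "norm ((1 - r / L) *\<^sub>R (x - c)) = (1 - r / L) * L"
        using L assms by (simp add: L_def[symmetric])
      moreover have "(1 - r / L) * L = L - r"
        using L assms by (simp add: field_simps)
      ultimately have "dist x (ball_proj c r x) = L - r" by (simp add: dist_norm)
      also have "\<dots> \<le> dist x c - dist c z"
        using z by (simp add: L_def dist_norm)
      also have "\<dots> \<le> dist x z"
        using dist_triangle[of x c z] dist_commute[of z c] by linarith
      finally show ?thesis .
    qed
  qed
qed auto

lemma ball_proj_in_ball:
  fixes c x :: "'a::euclidean_space"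
  assumes "r \<ge> 0"
  shows "norm (ball_proj c r x - c) \<le> r"
  using closest_point_in_set[of "cball c r" x] assms
  by (simp add: ball_proj_eq_closest_point dist_norm norm_minus_commute)

text \<open>Non-expansiveness towards points of the ball (projection onto a convex set).\<close>
lemma ball_proj_closer:
  fixes c x a :: "'a::euclidean_space"
  assumes "r \<ge> 0" and "norm (a - c) \<le> r"
  shows "norm (ball_proj c r x - a) \<le> norm (x - a)"
proof -
  have a: "a \<in> cball c r" using assms(2) by (simp add: dist_norm norm_minus_commute)
  have "dist (closest_point (cball c r) x) (closest_point (cball c r) a) \<le> dist x a"
    using assms(1) by (intro closest_point_lipschitz) auto
  thus ?thesis
    using assms(1) closest_point_self[OF a] by (simp add: ball_proj_eq_closest_point dist_norm)
qed

lemma ball_proj_on_segment: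
  assumes "r \<ge> 0"
  shows "\<exists>t. 0 \<le> t \<and> t \<le> 1 \<and> ball_proj c r x = c + t *\<^sub>R (x - c)"
proof (cases "norm (x - c) \<le> r")
  case True thus ?thesis by (intro exI[of _ 1]) (simp add: ball_proj_def)
next
  case False
  thus ?thesis using assms
    by (intro exI[of _ "r / norm (x - c)"]) (simp add: ball_proj_def divide_le_eq_1)
qed

section \<open>Norms of real matrices\<close>

lemma frob_norm_eq_norm: "frob_norm M = norm M"
  unfolding frob_norm_def norm_vec_def L2_set_def
  by (simp add: sum_nonneg)

lemma norm_transpose: "norm (transpose (M::real^'n^'m)) = norm M"
  unfolding frob_norm_eq_norm[symmetric] frob_norm_def transpose_def
  by (simp, subst sum.swap, simp)

lemma norm_sq_columns: "(norm (M::real^'n^'m))^2 = (\<Sum>j\<in>UNIV. (norm (column j M))^2)"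
proof -
  have "(norm M)^2 = (norm (transpose M))^2" by (simp add: norm_transpose)
  also have "\<dots> = (\<Sum>j\<in>UNIV. (norm (transpose M $ j))^2)"
    unfolding norm_vec_def L2_set_def by (simp add: sum_nonneg)
  also have "\<dots> = (\<Sum>j\<in>UNIV. (norm (column j M))^2)"
    by (simp add: transpose_def column_def)
  finally show ?thesis .
qed

lemma norm_le_by_columns:
  fixes M :: "real^'n^'m" and N :: "real^'n^'p"
  assumes "\<And>j. norm (column j M) \<le> norm (column j N)"
  shows "norm M \<le> norm N"
proof -
  have "(norm M)^2 \<le> (norm N)^2"
    unfolding norm_sq_columns by (intro sum_mono power_mono assms) simp
  thus ?thesis by (simp add: power2_le_iff_abs_le)
qed

lemma column_matrix_mult: "column j (A ** B) = A *v column j (B::real^'p^'n)"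
  by (simp add: vec_eq_iff matrix_matrix_mult_def matrix_vector_mult_def column_def)

lemma column_diff: "column j (X - Y) = column j X - column j (Y::real^'n^'m)"
  by (simp add: column_def vec_eq_iff)

lemma column_mat_of_cols: "column j (mat_of_cols c) = c j"
  by (simp add: mat_of_cols_def column_def transpose_def)

lemma matrix_mult_diff_left: "(A::real^'n^'m) ** (B - C) = A ** B - A ** C"
  by (simp add: vec_eq_iff matrix_matrix_mult_def sum_subtractf algebra_simps)

lemma matrix_mult_diff_right: "((B::real^'n^'m) - C) ** A = B ** A - C ** A"
  by (simp add: vec_eq_iff matrix_matrix_mult_def sum_subtractf algebra_simps)

lemma orthonormal_isometry:
  fixes U :: "real^'r^'d"
  assumes "transpose U ** U = mat 1"
  shows "norm (U *v y) = norm y"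
proof -
  have "inner (U *v y) (U *v y) = inner (transpose U *v (U *v y)) y"
    by (simp add: dot_lmul_matrix)
  also have "transpose U *v (U *v y) = y" by (simp add: matrix_vector_mul_assoc assms)
  finally show ?thesis by (simp add: norm_eq_sqrt_inner)
qed

lemma orthonormal_transpose_contraction:
  fixes U :: "real^'r^'d"
  assumes "transpose U ** U = mat 1"
  shows "norm (transpose U *v x) \<le> norm x"
proof -
  define y where "y = transpose U *v x"
  have "norm y * norm y = inner x (U *v y)"
    by (simp add: y_def dot_lmul_matrix[symmetric] flip: power2_norm_eq_inner power2_eq_square)
  also have "\<dots> \<le> norm x * norm y"
    using norm_cauchy_schwarz[of x "U *v y"] by (simp add: orthonormal_isometry assms)
  finally have "norm y \<le> norm x"
    by (cases "norm y = 0") (auto simp: mult_le_cancel_right)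
  thus ?thesis by (simp add: y_def)
qed

lemma orthonormal_unit_column:
  fixes U :: "real^'r^'d"
  assumes "transpose U ** U = mat 1"
  shows "norm (column i U) = 1"
proof -
  have "inner (column i U) (column i U) = 1"
    using arg_cong[OF assms, of "\<lambda>M. M $ i $ i"]
    by (simp add: matrix_mult_transpose_dot_column mat_def)
  thus ?thesis by (simp add: norm_eq_sqrt_inner)
qed

lemma orthonormal_mult_left_norm:
  fixes U :: "real^'r^'d" and M :: "real^'n^'r"
  assumes "transpose U ** U = mat 1"
  shows "norm (U ** M) = norm M"
proof -
  have "(norm (U ** M))^2 = (norm M)^2"
    by (simp add: norm_sq_columns column_matrix_mult orthonormal_isometry assms)
  thus ?thesis by (simp add: power2_eq_iff_nonneg)
qed

lemma orthonormal_mult_right_norm: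
  fixes V :: "real^'r^'k" and M :: "real^'r^'d"
  assumes "transpose V ** V = mat 1"
  shows "norm (M ** transpose V) = norm M"
  by (metis assms matrix_transpose_mul norm_transpose orthonormal_mult_left_norm transpose_transpose)

lemma orthonormal_transpose_mult_left_contraction:
  fixes U :: "real^'r^'d" and M :: "real^'n^'d"
  assumes "transpose U ** U = mat 1"
  shows "norm (transpose U ** M) \<le> norm M"
  by (rule norm_le_by_columns)
     (unfold column_matrix_mult, rule orthonormal_transpose_contraction[OF assms])

lemma orthonormal_mult_right_contraction:
  fixes V :: "real^'r^'k" and M :: "real^'k^'d"
  assumes "transpose V ** V = mat 1"
  shows "norm (M ** V) \<le> norm M"
  by (metis assms matrix_transpose_mul norm_transpose orthonormal_transpose_mult_left_contraction)

lemma spec_norm_bound: "norm ((A::real^'n^'m) *v x) \<le> spec_norm A * norm x"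
  unfolding spec_norm_def by (rule onorm) simp

lemma spec_norm_le: "(\<And>x. norm ((A::real^'n^'m) *v x) \<le> b * norm x) \<Longrightarrow> spec_norm A \<le> b"
  unfolding spec_norm_def by (rule onorm_le)

text \<open>If every column of M interpolates between the corresponding columns of B
  and C, then M = B (I - T) + C T with a diagonal 0 \<le> T \<le> I, so the spectral
  norm of M is at most the sum of those of B and C.\<close>
lemma spec_norm_column_interpolation:
  fixes M B C :: "real^'n^'m"
  assumes "\<And>j. \<exists>t. 0 \<le> t \<and> t \<le> 1 \<and> column j M = column j B + t *\<^sub>R (column j C - column j B)"
  shows "spec_norm M \<le> spec_norm B + spec_norm C"
proof (rule spec_norm_le)
  obtain t where t: "\<And>j. 0 \<le> t j \<and> t j \<le> 1"
    and col: "\<And>j. column j M = column j B + t j *\<^sub>R (column j C - column j B)"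
    using assms by metis
  have entry: "M $ a $ b = B $ a $ b + t b * (C $ a $ b - B $ a $ b)" for a b
    using arg_cong[OF col[of b], of "\<lambda>v. v $ a"] by (simp add: column_def)
  fix x :: "real^'n"
  define y where "y = (\<chi> j. (1 - t j) * x $ j)"
  define z where "z = (\<chi> j. t j * x $ j)"
  have "M *v x = B *v y + C *v z"
    by (simp add: vec_eq_iff matrix_vector_mult_def entry y_def z_def
        sum.distrib[symmetric] algebra_simps)
  hence "norm (M *v x) \<le> norm (B *v y) + norm (C *v z)" by (simp add: norm_triangle_ineq)
  also have "\<dots> \<le> spec_norm B * norm y + spec_norm C * norm z"
    using spec_norm_bound[of B y] spec_norm_bound[of C z] by linarith
  also have "\<dots> \<le> spec_norm B * norm x + spec_norm C * norm x"
  proof -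
    have "norm y \<le> norm x" "norm z \<le> norm x"
      by (rule norm_le_componentwise_cart,
          use t in \<open>auto simp: y_def z_def abs_mult intro: mult_left_le_one_le\<close>)+
    moreover have "spec_norm B \<ge> 0" "spec_norm C \<ge> 0"
      unfolding spec_norm_def by (simp_all add: onorm_pos_le)
    ultimately show ?thesis by (simp add: add_mono mult_left_mono)
  qed
  finally show "norm (M *v x) \<le> (spec_norm B + spec_norm C) * norm x"
    by (simp add: algebra_simps)
qed

section \<open>Singular value clipping\<close>

definition clip_diag :: "real^'r^'r \<Rightarrow> real \<Rightarrow> real^'r^'r" where
  "clip_diag D tau = (\<chi> i j. if i = j then min (D $ i $ j) tau else 0)"

text \<open>The diagonal entries of the compression U^T A V are bounded by the spectral
  norm of A, because they are bilinear forms in unit vectors.\<close>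
lemma compression_diagonal_le:
  fixes U :: "real^'r^'d" and V :: "real^'r^'k" and A :: "real^'k^'d"
  assumes "transpose U ** U = mat 1" and "transpose V ** V = mat 1"
  shows "(transpose U ** A ** V) $ i $ i \<le> spec_norm A"
proof -
  have "(transpose U ** A ** V) $ i $ i = column i (transpose U ** A ** V) $ i"
    by (simp add: column_def)
  also have "column i (transpose U ** A ** V) = transpose U *v (A *v column i V)"
    by (simp add: column_matrix_mult matrix_vector_mul_assoc)
  also have "(transpose U *v (A *v column i V)) $ i = inner (column i U) (A *v column i V)"
    by (simp add: matrix_vector_mul_component transpose_def column_def)
  also have "\<dots> \<le> norm (column i U) * norm (A *v column i V)" by (rule norm_cauchy_schwarz)
  also have "\<dots> \<le> spec_norm A"
    using spec_norm_bound[of A "column i V"] by (simp add: orthonormal_unit_column assms)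
  finally show ?thesis .
qed

text \<open>After
  conjugation by the orthonormal factors this is an entrywise comparison with
  C = U^T A V, whose diagonal is bounded by tau.\<close>
lemma clip_frobenius_bound:
  fixes U :: "real^'r^'d" and D :: "real^'r^'r" and V :: "real^'r^'k" and A :: "real^'k^'d"
  assumes UU: "transpose U ** U = mat 1" and VV: "transpose V ** V = mat 1"
    and diag: "\<forall>i j. i \<noteq> j \<longrightarrow> D $ i $ j = 0" and "spec_norm A \<le> tau"
  shows "norm (U ** clip_diag D tau ** transpose V - U ** D ** transpose V)
         \<le> norm (U ** D ** transpose V - A)"
proof -
  define C where "C = transpose U ** A ** V"
  have D_eq: "transpose U ** (U ** D ** transpose V) ** V = D"
  proof -
    have "transpose U ** (U ** D ** transpose V) ** V
          = (transpose U ** U) ** D ** (transpose V ** V)"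
      by (simp add: matrix_mul_assoc)
    thus ?thesis by (simp add: UU VV)
  qed
  have entrywise: "norm (clip_diag D tau - D) \<le> norm (D - C)"
  proof (intro norm_le_componentwise_cart)
    fix i j
    have "C $ i $ i \<le> tau"
      using compression_diagonal_le[OF UU VV, of A i] assms(4) by (simp add: C_def)
    thus "norm ((clip_diag D tau - D) $ i $ j) \<le> norm ((D - C) $ i $ j)"
      using diag by (auto simp: clip_diag_def)
  qed
  have "U ** clip_diag D tau ** transpose V - U ** D ** transpose V
        = U ** (clip_diag D tau - D) ** transpose V"
    by (simp only: matrix_mult_diff_left matrix_mult_diff_right)
  hence "norm (U ** clip_diag D tau ** transpose V - U ** D ** transpose V)
        = norm (clip_diag D tau - D)"
    by (simp add: orthonormal_mult_right_norm[OF VV] orthonormal_mult_left_norm[OF UU])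
  also have "\<dots> \<le> norm (D - C)" by (rule entrywise)
  also have "D - C = transpose U ** ((U ** D ** transpose V - A) ** V)"
    by (simp only: C_def matrix_mult_diff_left matrix_mult_diff_right matrix_mul_assoc
        D_eq[unfolded matrix_mul_assoc])
  also have "norm \<dots> \<le> norm ((U ** D ** transpose V - A) ** V)"
    by (rule orthonormal_transpose_mult_left_contraction[OF UU])
  also have "\<dots> \<le> norm (U ** D ** transpose V - A)"
    by (rule orthonormal_mult_right_contraction[OF VV])
  finally show ?thesis .
qed

lemma clip_spec_norm_bound:
  fixes U :: "real^'r^'d" and D :: "real^'r^'r" and V :: "real^'r^'k"
  assumes UU: "transpose U ** U = mat 1" and VV: "transpose V ** V = mat 1"
    and "\<forall>i. 0 \<le> D $ i $ i" and "tau \<ge> 0"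
  shows "spec_norm (U ** clip_diag D tau ** transpose V) \<le> tau"
proof (rule spec_norm_le)
  fix x :: "real^'k"
  define y where "y = transpose V *v x"
  have "(U ** clip_diag D tau ** transpose V) *v x = U *v (clip_diag D tau *v y)"
    by (simp only: y_def matrix_vector_mul_assoc matrix_mul_assoc)
  hence "norm ((U ** clip_diag D tau ** transpose V) *v x) = norm (clip_diag D tau *v y)"
    by (simp add: orthonormal_isometry[OF UU])
  also have "\<dots> \<le> norm (tau *\<^sub>R y)"
  proof (rule norm_le_componentwise_cart)
    fix i
    have "(clip_diag D tau *v y) $ i = min (D $ i $ i) tau * y $ i"
      by (simp add: clip_diag_def matrix_vector_mult_def if_distrib if_distribR cong: if_cong)
    thus "norm ((clip_diag D tau *v y) $ i) \<le> norm ((tau *\<^sub>R y) $ i)"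
      using assms(3,4) by (auto simp: abs_mult intro!: mult_right_mono)
  qed
  also have "\<dots> \<le> tau * norm x"
    using orthonormal_transpose_contraction[OF VV, of x] assms(4)
    by (simp add: y_def mult_left_mono)
  finally show "norm ((U ** clip_diag D tau ** transpose V) *v x) \<le> tau * norm x" .
qed

theorem mainTheorem10:
  fixes A A0 At :: "real^'k^'d"
    and U :: "real^'r^'d" and D :: "real^'r^'r" and V :: "real^'r^'k"
    and eta0 eta1 :: real
  defines "r \<equiv> eta0 * sqrt (real CARD('k)) / real CARD('d)"
    and "tau \<equiv> eta1 * sqrt (real CARD('k) / real CARD('d))"
  defines "Q \<equiv> U ** (\<chi> i j. if i = j then min (D $ i $ j) tau else 0) ** transpose V"
  defines "Ahat \<equiv> mat_of_cols (\<lambda>i.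
              if norm (column i Q - column i A0) \<le> r then column i Q
              else column i A0 + (r / norm (column i Q - column i A0)) *\<^sub>R (column i Q - column i A0))"
  assumes "eta0 > 0" and "eta1 > 0"
    and "spec_norm A \<le> tau" and "spec_norm A0 \<le> tau"
    and "\<forall>i. norm (column i A0 - column i A) \<le> r"
    and "transpose U ** U = mat 1" and "transpose V ** V = mat 1"
    and "\<forall>i j. i \<noteq> j \<longrightarrow> D $ i $ j = 0" and "\<forall>i. 0 \<le> D $ i $ i"
    and "At = U ** D ** transpose V"
  shows "frob_norm (Ahat - A) \<le> 2 * frob_norm (At - A)
       \<and> (\<forall>i. norm (column i Ahat - column i A) \<le> 2 * r)
       \<and> spec_norm Ahat \<le> 3 * tau"
proof -
  note UU = assms(10) and VV = assms(11)
  have r0: "r \<ge> 0" and tau0: "tau \<ge> 0"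
    using assms(5,6) by (simp_all add: r_def tau_def)
  have Q_eq: "Q = U ** clip_diag D tau ** transpose V"
    by (simp add: Q_def clip_diag_def)
  have col_Ahat: "column i Ahat = ball_proj (column i A0) r (column i Q)" for i
    by (simp add: Ahat_def column_mat_of_cols ball_proj_def)
  have A_near_A0: "norm (column i A - column i A0) \<le> r" for i
    using assms(9) by (simp add: norm_minus_commute)
  have "norm (Ahat - A) \<le> norm (Q - A)"
    by (rule norm_le_by_columns)
       (simp add: column_diff col_Ahat ball_proj_closer r0 A_near_A0)
  also have "\<dots> \<le> norm (Q - At) + norm (At - A)"
    using norm_triangle_ineq[of "Q - At" "At - A"] by simp
  also have "norm (Q - At) \<le> norm (At - A)"
    unfolding Q_eq assms(14) by (rule clip_frobenius_bound[OF UU VV assms(12,7)])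
  finally have frob: "frob_norm (Ahat - A) \<le> 2 * frob_norm (At - A)"
    by (simp add: frob_norm_eq_norm)
  have cols: "norm (column i Ahat - column i A) \<le> 2 * r" for i
    using norm_triangle_ineq[of "column i Ahat - column i A0" "column i A0 - column i A"]
      ball_proj_in_ball[OF r0, of "column i A0" "column i Q"] assms(9)[rule_format, of i]
    by (simp add: col_Ahat)
  have "spec_norm Ahat \<le> spec_norm A0 + spec_norm Q"
    by (rule spec_norm_column_interpolation) (simp add: col_Ahat ball_proj_on_segment r0)
  also have "\<dots> \<le> 3 * tau"
    using assms(8) clip_spec_norm_bound[OF UU VV assms(13) tau0] tau0 by (simp add: Q_eq)
  finally show ?thesis using frob cols by blast
qed

end
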